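(* Let $n\ge 2$ be an integer and let $$\mathcal{T}_n:=\{(0,S_1,\dots,S_{2n})\in\mathbb{Z}^{2n+1}: |S_i-S_{i-1}|=1 \text{ for } 1\le i\le 2n\ (S_0=0),\ S_{2n}=0,\ S_i\ge 0 \text{ for all } 1\le i\le 2n-1\}.$$ For a path $(0,S_1,\dots,S_{2n})\in\mathcal{T}_n$ let $N(0,S_1,\dots,S_{2n}):=|\{i\in\{1,\dots,n-1\}: S_{2i}=0\}|$, and set $$C_n:=\{S\in\mathcal{T}_n: N(S)=0\},\qquad D_n:=\{S\in\mathcal{T}_n: N(S)=1\}.$$ For $(0,S_1,\dots,S_{2n})\in C_n$ let $\tau:=\min\{k>1: S_k=1\}$, and for $\ell=1,\dots,2n$ define $$T_\ell:=\begin{cases}S_\ell-2 & \text{if } 1<\ell<\tau \text{ and } S_{\ell+1}=S_\ell-1,\\ S_\ell & \text{otherwise},\end{cases}$$ and let $\Phi_2(0,S_1,\dots,S_{2n}):=(0,T_1,\dots,T_{2n})$. Then $\Phi_2$ is a well-defined map from $C_n$ to $D_n$ and it is a bijection between $C_n$ and $D_n$.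
   Context: $C_n$ is the set of $2n$-step simple random walk paths from $0$ to $0$ that are strictly positive at all intermediate times $1,\dots,2n-1$; $D_n$ is the set of $2n$-step simple random walk paths from $0$ to $0$ that are nonnegative at all times and return to $0$ at exactly one intermediate time. *)

theory Defs
  imports Main
begin

text \<open>A path (0,S_1,...,S_2n) is represented as an int list of length 2n+1,
  whose i-th entry is S_i.\<close>

definition T :: "nat \<Rightarrow> int list set" where
  "T n = {S. length S = 2*n + 1 \<and> S ! 0 = 0
            \<and> (\<forall>i\<in>{1..2*n}. \<bar>S ! i - S ! (i - 1)\<bar> = 1)
            \<and> S ! (2*n) = 0
            \<and> (\<forall>i\<in>{1..2*n-1}. S ! i \<ge> 0)}"

definition N :: "nat \<Rightarrow> int list \<Rightarrow> nat" where
  "N n S = card {i\<in>{1..n-1}. S ! (2*i) = 0}"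

definition C :: "nat \<Rightarrow> int list set" where
  "C n = {S\<in>T n. N n S = 0}"

definition D :: "nat \<Rightarrow> int list set" where
  "D n = {S\<in>T n. N n S = 1}"

definition tau :: "int list \<Rightarrow> nat" where
  "tau S = (LEAST k. k > 1 \<and> S ! k = 1)"

definition Phi2 :: "int list \<Rightarrow> int list" where
  "Phi2 S = map (\<lambda>l. if 1 < l \<and> l < tau S \<and> S ! (l+1) = S ! l - 1
                      then S ! l - 2 else S ! l) [0..<length S]"

end

(* A path in C n is strictly positive, so it starts with an up-step and first comes back
   to height 1 at some time tau.  On [0, tau) the map Phi2 shifts the path one step left
   and one unit down, which moves the initial up-step to time tau; the image then touches
   zero exactly once, at time tau - 1.  Conversely, moving the up-step that follows the
   unique return of a path in D n to the front yields a strictly positive path, and the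
   two moves are mutually inverse. *)

theory Submission
  imports Defs
begin

lemma T_memI:
  assumes "length S = 2*n+1" "S!0 = 0" "S!(2*n) = 0"
    and "\<And>i. 1 \<le> i \<Longrightarrow> i \<le> 2*n \<Longrightarrow> \<bar>S!i - S!(i-1)\<bar> = 1"
    and "\<And>i. 1 \<le> i \<Longrightarrow> i \<le> 2*n-1 \<Longrightarrow> 0 \<le> S!i"
  shows "S \<in> T n"
  using assms by (auto simp: T_def)

lemma T_length: "S \<in> T n \<Longrightarrow> length S = 2*n+1"
  by (simp add: T_def)

lemma T_start: "S \<in> T n \<Longrightarrow> S!0 = 0"
  by (simp add: T_def)

lemma T_end: "S \<in> T n \<Longrightarrow> S!(2*n) = 0"
  by (simp add: T_def)

lemma T_step: "S \<in> T n \<Longrightarrow> 1 \<le> i \<Longrightarrow> i \<le> 2*n \<Longrightarrow> \<bar>S!i - S!(i-1)\<bar> = 1"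
  by (simp add: T_def)

lemma T_nonneg:
  assumes "S \<in> T n" "i \<le> 2*n"
  shows "0 \<le> S!i"
  using assms T_start[OF assms(1)] T_end[OF assms(1)]
  by (cases "i = 0 \<or> i = 2*n") (auto simp: T_def)

lemma T_parity:
  assumes "S \<in> T n"
  shows "i \<le> 2*n \<Longrightarrow> even (S!i) \<longleftrightarrow> even i"
proof (induction i)
  case 0
  then show ?case using T_start[OF assms] by simp
next
  case (Suc i)
  then have "\<bar>S!(Suc i) - S!i\<bar> = 1"
    using T_step[OF assms, of "Suc i"] by simp
  then have "S!(Suc i) = S!i + 1 \<or> S!(Suc i) = S!i - 1"
    by arith
  with Suc show ?case by auto
qed

definition returns :: "nat \<Rightarrow> int list \<Rightarrow> nat set" where
  "returns n S = {i \<in> {1..2*n-1}. S!i = 0}"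

lemma finite_returns [simp]: "finite (returns n S)"
  by (simp add: returns_def)

text \<open>A path can only vanish at even times, so N counts all its returns to zero.\<close>

lemma N_eq_card_returns:
  assumes "S \<in> T n"
  shows "N n S = card (returns n S)"
proof -
  have "returns n S = (\<lambda>i. 2*i) ` {i \<in> {1..n-1}. S!(2*i) = 0}"
  proof (rule set_eqI, rule iffI)
    fix i assume i: "i \<in> returns n S"
    then have "even i"
      using T_parity[OF assms, of i] by (auto simp: returns_def)
    then show "i \<in> (\<lambda>i. 2*i) ` {i \<in> {1..n-1}. S!(2*i) = 0}"
      using i by (auto simp: returns_def elim!: evenE)
  qed (auto simp: returns_def)
  then show ?thesis
    by (simp add: N_def card_image inj_on_def)
qed

lemma mem_C_iff: "S \<in> C n \<longleftrightarrow> S \<in> T n \<and> returns n S = {}"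
  by (auto simp: C_def N_eq_card_returns)

lemma mem_D_iff: "U \<in> D n \<longleftrightarrow> U \<in> T n \<and> (\<exists>z. returns n U = {z})"
  by (auto simp: D_def N_eq_card_returns card_1_singleton_iff)

lemma C_pos:
  assumes "S \<in> C n" "1 \<le> i" "i \<le> 2*n-1"
  shows "0 < S!i"
  using assms T_nonneg[of S n i] by (fastforce simp: mem_C_iff returns_def)

lemma C_before_end:
  assumes "S \<in> C n" "1 \<le> n"
  shows "S!(2*n-1) = 1"
proof -
  have "S \<in> T n" using assms(1) by (simp add: mem_C_iff)
  then have "\<bar>S!(2*n) - S!(2*n-1)\<bar> = 1" "S!(2*n) = 0"
    using T_step[of S n "2*n"] T_end assms(2) by simp_all
  moreover have "0 < S!(2*n-1)" using C_pos[OF assms(1)] assms(2) by simp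
  ultimately show ?thesis by simp
qed

lemma tau_spec:
  assumes "1 < k" "S!k = 1"
  shows "1 < tau S" "tau S \<le> k" "S!(tau S) = 1"
  using LeastI[of "\<lambda>k. 1 < k \<and> S!k = 1" k] Least_le[of "\<lambda>k. 1 < k \<and> S!k = 1" k] assms
  by (simp_all add: tau_def)

lemma nth_ne_1_before_tau: "1 < j \<Longrightarrow> j < tau S \<Longrightarrow> S!j \<noteq> 1"
  unfolding tau_def using not_less_Least by blast

lemma tau_eqI:
  assumes "1 < k" "S!k = 1" "\<And>j. 1 < j \<Longrightarrow> j < k \<Longrightarrow> S!j \<noteq> 1"
  shows "tau S = k"
  unfolding tau_def using assms by (intro Least_equality) (auto simp: not_le[symmetric])

text \<open>In terms of steps, lower_prefix k moves the first step of a path (an up-step) to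
  time k, and raise_prefix k moves the up-step at time k back to the start.\<close>

definition lower_prefix :: "nat \<Rightarrow> int list \<Rightarrow> int list" where
  "lower_prefix k S = map (\<lambda>m. if m < k then S!(m+1) - 1 else S!m) [0..<length S]"

definition raise_prefix :: "nat \<Rightarrow> int list \<Rightarrow> int list" where
  "raise_prefix k U =
     map (\<lambda>l. if l = 0 then 0 else if l \<le> k then U!(l-1) + 1 else U!l) [0..<length U]"

lemma length_lower_prefix [simp]: "length (lower_prefix k S) = length S"
  by (simp add: lower_prefix_def)

lemma length_raise_prefix [simp]: "length (raise_prefix k U) = length U"
  by (simp add: raise_prefix_def)

lemma nth_lower_prefix:
  "m < length S \<Longrightarrow> lower_prefix k S ! m = (if m < k then S!(m+1) - 1 else S!m)"
  by (simp add: lower_prefix_def)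

lemma nth_raise_prefix:
  "l < length U \<Longrightarrow> raise_prefix k U ! l = (if l = 0 then 0 else if l \<le> k then U!(l-1) + 1 else U!l)"
  by (simp add: raise_prefix_def)

lemma raise_lower_prefix: "S!0 = 0 \<Longrightarrow> raise_prefix k (lower_prefix k S) = S"
  by (rule nth_equalityI) (auto simp: nth_lower_prefix nth_raise_prefix)

lemma lower_raise_prefix:
  assumes "1 \<le> k" "k < length U" "U!k = U!(k-1) + 1"
  shows "lower_prefix k (raise_prefix k U) = U"
  using assms by (intro nth_equalityI) (auto simp: nth_lower_prefix nth_raise_prefix)

lemma lower_prefix_in_T:
  assumes S: "S \<in> T n" and "k \<le> 2*n" "S!k = 1" "\<And>i. 1 \<le> i \<Longrightarrow> i \<le> k \<Longrightarrow> 1 \<le> S!i"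
  shows "lower_prefix k S \<in> T n"
proof -
  have len: "length S = 2*n+1" using T_length[OF S] .
  have "k \<noteq> 0" using assms(3) T_start[OF S] by (metis zero_neq_one)
  then have "S!1 = 1"
    using T_step[OF S, of 1] T_start[OF S] assms(2) assms(4)[of 1] by simp
  show ?thesis
  proof (rule T_memI)
    fix i assume i: "1 \<le> i" "i \<le> 2*n"
    consider "i < k" | "i = k" | "k < i" by linarith
    then show "\<bar>lower_prefix k S ! i - lower_prefix k S ! (i-1)\<bar> = 1"
      using i T_step[OF S, of i] T_step[OF S, of "i+1"] assms(2,3)
      by cases (auto simp: nth_lower_prefix len)
  next
    fix i assume "1 \<le> i" "i \<le> 2*n-1"
    then show "0 \<le> lower_prefix k S ! i"
      using assms(4)[of "i+1"] T_nonneg[OF S, of i] by (auto simp: nth_lower_prefix len)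
  qed (use \<open>k \<noteq> 0\<close> \<open>S!1 = 1\<close> assms(2) T_end[OF S] in \<open>auto simp: nth_lower_prefix len\<close>)
qed

lemma returns_lower_prefix:
  assumes "S \<in> T n" "k \<le> 2*n"
  shows "returns n (lower_prefix k S) = {i \<in> {1..<k}. S!(i+1) = 1} \<union> {i \<in> returns n S. k \<le> i}"
  using assms by (auto simp: returns_def nth_lower_prefix T_length split: if_splits)

lemma raise_prefix_in_T:
  assumes U: "U \<in> T n" and "1 \<le> k" "k < 2*n" "U!k = U!(k-1) + 1"
  shows "raise_prefix k U \<in> T n"
proof (rule T_memI)
  have len: "length U = 2*n+1" using T_length[OF U] .
  fix i assume i: "1 \<le> i" "i \<le> 2*n"
  consider "i = 1" | "1 < i" "i \<le> k" | "i = k+1" | "k+1 < i" using i(1) by linarith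
  then show "\<bar>raise_prefix k U ! i - raise_prefix k U ! (i-1)\<bar> = 1"
    using i T_step[OF U, of i] T_step[OF U, of "i-1"] T_step[OF U, of "k+1"] T_start[OF U] assms(2-4)
    by cases (auto simp: nth_raise_prefix len)
next
  fix i assume "1 \<le> i" "i \<le> 2*n-1"
  then show "0 \<le> raise_prefix k U ! i"
    using T_nonneg[OF U, of i] T_nonneg[OF U, of "i-1"] by (auto simp: nth_raise_prefix T_length[OF U])
qed (use assms T_end[OF U] in \<open>auto simp: nth_raise_prefix T_length\<close>)

lemma returns_raise_prefix:
  assumes "U \<in> T n"
  shows "returns n (raise_prefix k U) = {i \<in> returns n U. k < i}"
proof -
  have "raise_prefix k U ! i = 0 \<longleftrightarrow> k < i \<and> U!i = 0" if "1 \<le> i" "i \<le> 2*n-1" for i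
  proof -
    have "0 \<le> U!(i-1)" using that by (intro T_nonneg[OF assms]) simp
    with that show ?thesis by (auto simp: nth_raise_prefix T_length[OF assms])
  qed
  then show ?thesis
    by (auto simp: returns_def)
qed

lemma C_start:
  assumes "S \<in> C n" "2 \<le> n"
  shows "S!1 = 1" "S!2 = 2"
proof -
  have S: "S \<in> T n" using assms(1) by (simp add: mem_C_iff)
  have "0 < S!1" "0 < S!2" using C_pos[OF assms(1)] assms(2) by simp_all
  moreover have "\<bar>S!1 - S!0\<bar> = 1" "\<bar>S!2 - S!1\<bar> = 1"
    using T_step[OF S, of 1] T_step[OF S, of 2] assms(2) by simp_all
  ultimately show "S!1 = 1" "S!2 = 2" using T_start[OF S] by simp_all
qed

lemma C_tau:
  assumes "S \<in> C n" "2 \<le> n"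
  shows "1 < tau S" "tau S \<le> 2*n-1" "S!(tau S) = 1"
  using tau_spec[of "2*n-1" S] C_before_end[OF assms(1)] assms(2) by simp_all

lemma nth_Phi2:
  "m < length S \<Longrightarrow>
     Phi2 S ! m = (if 1 < m \<and> m < tau S \<and> S!(m+1) = S!m - 1 then S!m - 2 else S!m)"
  by (simp add: Phi2_def)

lemma length_Phi2 [simp]: "length (Phi2 S) = length S"
  by (simp add: Phi2_def)

lemma Phi2_eq_lower_prefix:
  assumes C: "S \<in> C n" and n: "2 \<le> n"
  shows "Phi2 S = lower_prefix (tau S) S"
proof (rule nth_equalityI)
  have S: "S \<in> T n" using C by (simp add: mem_C_iff)
  fix m assume "m < length (Phi2 S)"
  then have m: "m < length S" by simp
  show "Phi2 S ! m = lower_prefix (tau S) S ! m"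
  proof (cases "m < tau S")
    case True
    then have lower: "lower_prefix (tau S) S ! m = S!(m+1) - 1"
      using m by (simp add: nth_lower_prefix)
    consider "m = 0" | "m = 1" | "1 < m" by linarith
    then show ?thesis
    proof cases
      case 1
      then show ?thesis using m lower T_start[OF S] C_start[OF C n] by (simp add: nth_Phi2)
    next
      case 2
      then show ?thesis using m lower C_start[OF C n] by (simp add: nth_Phi2 numeral_2_eq_2)
    next
      case 3
      have "\<bar>S!(m+1) - S!m\<bar> = 1"
        using T_step[OF S, of "m+1"] True C_tau[OF C n] by simp
      then show ?thesis using 3 True m lower by (auto simp: nth_Phi2)
    qed
  qed (use m in \<open>simp add: nth_Phi2 nth_lower_prefix\<close>)
qed simp

lemma Phi2_in_T:
  assumes C: "S \<in> C n" and n: "2 \<le> n"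
  shows "Phi2 S \<in> T n"
  unfolding Phi2_eq_lower_prefix[OF C n]
proof (rule lower_prefix_in_T)
  show "S \<in> T n" using C by (simp add: mem_C_iff)
  show "tau S \<le> 2*n" "S!(tau S) = 1" using C_tau[OF C n] by simp_all
  show "\<And>i. 1 \<le> i \<Longrightarrow> i \<le> tau S \<Longrightarrow> 1 \<le> S!i"
    using C_pos[OF C] C_tau[OF C n] by fastforce
qed

lemma returns_Phi2:
  assumes C: "S \<in> C n" and n: "2 \<le> n"
  shows "returns n (Phi2 S) = {tau S - 1}"
proof -
  have S: "S \<in> T n" and "returns n S = {}" using C by (simp_all add: mem_C_iff)
  moreover have "{i \<in> {1..<tau S}. S!(i+1) = 1} = {tau S - 1}"
  proof (rule set_eqI)
    fix i
    have "S!(i+1) \<noteq> 1" if "1 \<le> i" "i+1 < tau S"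
      using nth_ne_1_before_tau[of "i+1" S] that by simp
    then show "i \<in> {i \<in> {1..<tau S}. S!(i+1) = 1} \<longleftrightarrow> i \<in> {tau S - 1}"
      using C_tau[OF C n] by (cases "i+1 = tau S") auto
  qed
  ultimately show ?thesis
    using returns_lower_prefix[OF S, of "tau S"] C_tau[OF C n]
    by (simp add: Phi2_eq_lower_prefix[OF C n])
qed

lemma inj_on_Phi2:
  assumes n: "2 \<le> n"
  shows "inj_on Phi2 (C n)"
proof (rule inj_onI)
  fix S S' assume C: "S \<in> C n" "S' \<in> C n" and eq: "Phi2 S = Phi2 S'"
  have "tau S = tau S'"
    using returns_Phi2[OF C(1) n] returns_Phi2[OF C(2) n] C_tau[OF C(1) n] C_tau[OF C(2) n] eq
    by simp
  moreover have "S = raise_prefix (tau S) (Phi2 S)" if "S \<in> C n" for S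
  proof -
    have "S!0 = 0" using that T_start[of S n] by (simp add: mem_C_iff)
    then show ?thesis by (simp add: Phi2_eq_lower_prefix[OF that n] raise_lower_prefix)
  qed
  ultimately show "S = S'" using C eq by metis
qed

lemma D_subset_image_Phi2:
  assumes n: "2 \<le> n"
  shows "D n \<subseteq> Phi2 ` C n"
proof
  fix U assume "U \<in> D n"
  then obtain z where U: "U \<in> T n" and z: "returns n U = {z}" by (auto simp: mem_D_iff)
  then have z_range: "1 \<le> z" "z \<le> 2*n-1" and "U!z = 0" by (auto simp: returns_def)
  have up: "U!(z+1) = 1"
    using T_step[OF U, of "z+1"] T_nonneg[OF U, of "z+1"] z_range \<open>U!z = 0\<close> by simp
  then have "z+1 < 2*n" using T_end[OF U] z_range by (cases "z+1 = 2*n") auto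
  define S where "S = raise_prefix (z+1) U"
  have "S \<in> T n"
    unfolding S_def using U z_range \<open>z+1 < 2*n\<close> up \<open>U!z = 0\<close>
    by (intro raise_prefix_in_T) simp_all
  moreover have "returns n S = {}"
    unfolding S_def returns_raise_prefix[OF U] z by simp
  ultimately have C: "S \<in> C n" by (simp add: mem_C_iff)
  have "tau S = z+1"
  proof (rule tau_eqI)
    show "S!(z+1) = 1"
      unfolding S_def using \<open>U!z = 0\<close> \<open>z+1 < 2*n\<close> by (simp add: nth_raise_prefix T_length[OF U])
    fix j assume "1 < j" "j < z+1"
    moreover have "U!(j-1) \<noteq> 0"
    proof -
      have "j-1 \<notin> returns n U" using z \<open>1 < j\<close> \<open>j < z+1\<close> by simp
      then show ?thesis using \<open>1 < j\<close> \<open>j < z+1\<close> z_range by (simp add: returns_def)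
    qed
    ultimately show "S!j \<noteq> 1"
      unfolding S_def using \<open>z+1 < 2*n\<close> by (simp add: nth_raise_prefix T_length[OF U])
  qed (use z_range in simp)
  then have "Phi2 S = lower_prefix (z+1) (raise_prefix (z+1) U)"
    using Phi2_eq_lower_prefix[OF C n] by (simp add: S_def)
  also have "\<dots> = U"
    using up \<open>U!z = 0\<close> \<open>z+1 < 2*n\<close> by (intro lower_raise_prefix) (simp_all add: T_length[OF U])
  finally have "Phi2 S = U" .
  with C show "U \<in> Phi2 ` C n" by blast
qed

theorem theorem2:
  fixes n :: nat
  assumes "n \<ge> 2"
  shows "Phi2 ` C n \<subseteq> D n \<and> bij_betw Phi2 (C n) (D n)"
proof -
  have "Phi2 ` C n \<subseteq> D n"
    using Phi2_in_T returns_Phi2 assms by (auto simp: mem_D_iff)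
  with D_subset_image_Phi2[OF assms] inj_on_Phi2[OF assms]
  show ?thesis by (simp add: bij_betw_def)
qed

end
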